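(* Let $a\in\mathbb{C}$ with $|a-\tfrac14|\le\tfrac14$ and $a\neq0$, and let $\varphi(z)=az^2+(1-2a)z+a$. Then the iterates $\varphi_n$ converge to $1$ uniformly on the entire open disk $\mathbb{D}$.
   Context: $\mathbb{D}$ is the open unit disk; $\varphi_n$ denotes the $n$-th iterate of $\varphi$. Uniform convergence on $\mathbb{D}$ means $\lim_{n\to\infty}\sup_{z\in\mathbb{D}}|\varphi_n(z)-1|=0$. *)

theory Defs
  imports "HOL-Analysis.Analysis"
begin

end

theory Submission
  imports Defs
begin

text \<open>
  In the coordinate \<open>w = z - 1\<close> the map becomes \<open>g w = w + a w\<^sup>2\<close> with a parabolic fixed
  point at \<open>0\<close>, and the unit disk lies in the closed disk \<open>K = cball (-1) 1\<close>, which for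
  \<open>w \<noteq> 0\<close> is the half-plane \<open>Re (1/w) \<le> -1/2\<close>. The identity
  \<open>1 / g w = 1 / w - 1 / (1/a + w)\<close> shows that each step lowers \<open>Re (1/w)\<close> by
  \<open>Re (1 / (1/a + w)) \<ge> 0\<close>, as the hypothesis on \<open>a\<close> says exactly \<open>Re (1/a) \<ge> 2\<close>;
  in particular \<open>K\<close> is invariant. This decrement may vanish (at \<open>w = -2\<close> when
  \<open>Re (1/a) = 2\<close>), but near \<open>w = -2\<close> the next point \<open>g w \<approx> 4a - 2\<close> has a decrement
  bounded below, so over any two consecutive steps \<open>Re (1/w)\<close> drops by a uniform
  \<open>\<delta> > 0\<close>. Hence \<open>\<bar>g\<^sup>n w\<bar> \<le> 1 / (1/2 + \<lfloor>n/2\<rfloor> \<delta>)\<close> uniformly on \<open>K\<close>.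
\<close>

lemma Re_one_divide: "Re (1 / z) = Re z / (cmod z)\<^sup>2"
  using Re_Reals_divide[of 1 z] by simp

lemma cmod_minus_quarter_le_iff:
  assumes "a \<noteq> 0"
  shows "cmod (a - 1/4) \<le> 1/4 \<longleftrightarrow> 2 \<le> Re (1 / a)"
proof -
  have "cmod (a - 1/4) \<le> 1/4 \<longleftrightarrow> (cmod (a - 1/4))\<^sup>2 \<le> (1/4)\<^sup>2"
    by (simp add: abs_le_square_iff)
  also have "(cmod (a - 1/4))\<^sup>2 = (cmod a)\<^sup>2 - Re a / 2 + 1/16"
    unfolding cmod_power2 by (simp add: power2_eq_square algebra_simps)
  also have "\<dots> \<le> (1/4)\<^sup>2 \<longleftrightarrow> 2 * (cmod a)\<^sup>2 \<le> Re a"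
    by (auto simp: power2_eq_square)
  also have "\<dots> \<longleftrightarrow> 2 \<le> Re (1 / a)"
    using assms by (simp add: Re_one_divide le_divide_eq)
  finally show ?thesis .
qed

lemma Re_one_divide_ge_two_imp:
  assumes "2 \<le> Re (1 / a)"
  shows "0 < Re a" "cmod a \<le> 1/2"
proof -
  have "0 < Re a / (cmod a)\<^sup>2" using assms by (simp add: Re_one_divide[symmetric])
  then show "0 < Re a" by (simp add: zero_less_divide_iff)
  have "2 \<le> 1 / cmod a" using assms abs_Re_le_cmod[of "1 / a"] by (simp add: norm_divide)
  moreover have "a \<noteq> 0" using assms by auto
  ultimately show "cmod a \<le> 1/2" by (simp add: field_simps)
qed

lemma mem_cball_minus_one_iff: "w \<in> cball (-1) 1 \<longleftrightarrow> (cmod w)\<^sup>2 \<le> - 2 * Re w"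
proof -
  have "w \<in> cball (-1) 1 \<longleftrightarrow> (cmod (w + 1))\<^sup>2 \<le> 1"
    by (simp add: dist_norm norm_minus_commute add.commute power_le_one_iff)
  also have "(cmod (w + 1))\<^sup>2 = (cmod w)\<^sup>2 + 2 * Re w + 1"
    unfolding cmod_power2 by (simp add: power2_eq_square algebra_simps)
  finally show ?thesis by linarith
qed

lemma mem_cball_minus_one_iff_Re_one_divide:
  assumes "w \<noteq> 0"
  shows "w \<in> cball (-1) 1 \<longleftrightarrow> Re (1 / w) \<le> -1/2"
  using assms unfolding mem_cball_minus_one_iff Re_one_divide
  by (auto simp: divide_le_eq)

lemma cball_minus_one_norm_plus_two:
  assumes "w \<in> cball (-1) 1"
  shows "(cmod (w + 2))\<^sup>2 \<le> 2 * (2 + Re w)"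
proof -
  have "(cmod (w + 2))\<^sup>2 = (cmod w)\<^sup>2 + 4 * Re w + 4"
    unfolding cmod_power2 by (simp add: power2_eq_square algebra_simps)
  moreover have "(cmod w)\<^sup>2 \<le> - 2 * Re w" using assms mem_cball_minus_one_iff by blast
  ultimately show ?thesis by (simp add: algebra_simps)
qed

lemma cball_minus_one_Re_ge:
  assumes "w \<in> cball (-1) 1"
  shows "-2 \<le> Re w"
proof -
  have "0 \<le> 2 * (2 + Re w)"
    using zero_le_power2 cball_minus_one_norm_plus_two[OF assms] by (rule order_trans)
  then show ?thesis by simp
qed

lemma cball_minus_one_norm_le:
  assumes "w \<in> cball (-1) 1"
  shows "cmod w \<le> 2" "cmod (w - 2) \<le> 4"
proof -
  have "cmod (w + 1) \<le> 1" using assms by (simp add: dist_norm norm_minus_commute add.commute)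
  moreover have "cmod w \<le> cmod (w + 1) + 1" and "cmod (w - 2) \<le> cmod (w + 1) + 3"
    using norm_triangle_ineq4[of "w + 1" 1] norm_triangle_ineq4[of "w + 1" 3]
    by (simp_all add: algebra_simps)
  ultimately show "cmod w \<le> 2" "cmod (w - 2) \<le> 4" by linarith+
qed

definition parabolic_quad :: "complex \<Rightarrow> complex \<Rightarrow> complex"
  where "parabolic_quad a w = w + a * w\<^sup>2"

definition inverse_drift :: "complex \<Rightarrow> complex \<Rightarrow> real"
  where "inverse_drift a w = Re (1 / (1 / a + w))"

lemma one_divide_parabolic_quad:
  assumes "a \<noteq> 0" "w \<noteq> 0" "parabolic_quad a w \<noteq> 0"
  shows "1 / parabolic_quad a w = 1 / w - 1 / (1 / a + w)"
proof -
  have factor: "parabolic_quad a w = a * w * (1 / a + w)"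
    using assms(1) by (simp add: parabolic_quad_def field_simps power2_eq_square)
  with assms have "1 / a + w \<noteq> 0" by auto
  with assms(2) have "1 / w - 1 / (1 / a + w) = (1 / a) / (w * (1 / a + w))"
    by (simp add: field_simps)
  then show ?thesis unfolding factor by simp
qed

lemma Re_one_divide_parabolic_quad:
  assumes "a \<noteq> 0" "w \<noteq> 0" "parabolic_quad a w \<noteq> 0"
  shows "Re (1 / parabolic_quad a w) = Re (1 / w) - inverse_drift a w"
  by (simp add: one_divide_parabolic_quad[OF assms] inverse_drift_def)

lemma inverse_drift_nonneg:
  assumes "2 \<le> Re (1 / a)" "w \<in> cball (-1) 1"
  shows "0 \<le> inverse_drift a w"
proof -
  have "0 \<le> Re (1 / a + w)" using assms cball_minus_one_Re_ge[of w] by simp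
  then show ?thesis by (simp add: inverse_drift_def Re_one_divide)
qed

lemma parabolic_quad_cball:
  assumes "2 \<le> Re (1 / a)" "w \<in> cball (-1) 1"
  shows "parabolic_quad a w \<in> cball (-1) 1"
proof (cases "w = 0 \<or> parabolic_quad a w = 0")
  case True
  then show ?thesis by (auto simp: parabolic_quad_def)
next
  case False
  have "a \<noteq> 0" using assms(1) by auto
  have "Re (1 / parabolic_quad a w) \<le> Re (1 / w)"
    using Re_one_divide_parabolic_quad[OF \<open>a \<noteq> 0\<close>] inverse_drift_nonneg[OF assms] False
    by simp
  also have "\<dots> \<le> -1/2" using assms(2) False mem_cball_minus_one_iff_Re_one_divide by blast
  finally show ?thesis using False mem_cball_minus_one_iff_Re_one_divide by blast
qed

lemma parabolic_quad_iterate_cball: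
  "2 \<le> Re (1 / a) \<Longrightarrow> w \<in> cball (-1) 1 \<Longrightarrow> (parabolic_quad a ^^ n) w \<in> cball (-1) 1"
  by (induction n) (auto intro: parabolic_quad_cball simp del: mem_cball)

lemma inverse_drift_ge:
  assumes "2 \<le> Re (1 / a)" "w \<in> cball (-1) 1"
  shows "Re (1 / a + w) / (cmod (1 / a) + 2)\<^sup>2 \<le> inverse_drift a w"
proof (cases "1 / a + w = 0")
  case True
  then show ?thesis by (simp add: inverse_drift_def)
next
  case False
  have "cmod (1 / a + w) \<le> cmod (1 / a) + 2"
    using norm_triangle_ineq[of "1 / a" w] cball_minus_one_norm_le(1)[OF assms(2)] by linarith
  then have le: "(cmod (1 / a + w))\<^sup>2 \<le> (cmod (1 / a) + 2)\<^sup>2" by (simp add: power_mono)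
  have nonneg: "0 \<le> Re (1 / a + w)" using assms cball_minus_one_Re_ge[of w] by simp
  have "0 < cmod (1 / a) + 2" by (simp add: add_nonneg_pos)
  then have "0 < (cmod (1 / a) + 2)\<^sup>2 * (cmod (1 / a + w))\<^sup>2"
    using False by simp
  then show ?thesis
    unfolding inverse_drift_def Re_one_divide by (rule divide_left_mono[OF le nonneg])
qed

lemma Re_parabolic_quad_ge:
  assumes "cmod a \<le> 1/2" "w \<in> cball (-1) 1"
  shows "4 * Re a - 2 - 3 * cmod (w + 2) \<le> Re (parabolic_quad a w)"
proof -
  have expand: "parabolic_quad a w = (4 * a - 2) + (w + 2) * (1 + a * (w - 2))"
    by (simp add: parabolic_quad_def algebra_simps power2_eq_square)
  have "cmod (1 + a * (w - 2)) \<le> 1 + cmod a * cmod (w - 2)"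
    by (metis norm_one norm_mult norm_triangle_ineq)
  also have "\<dots> \<le> 3"
    using mult_mono[OF assms(1) cball_minus_one_norm_le(2)[OF assms(2)]] by simp
  finally have "cmod (w + 2) * cmod (1 + a * (w - 2)) \<le> cmod (w + 2) * 3"
    by (rule mult_left_mono) simp
  then have "cmod ((w + 2) * (1 + a * (w - 2))) \<le> 3 * cmod (w + 2)"
    by (simp add: norm_mult)
  then show ?thesis
    using abs_Re_le_cmod[of "(w + 2) * (1 + a * (w - 2))"] by (simp add: expand)
qed

lemma inverse_drift_two_step:
  assumes "2 \<le> Re (1 / a)" "w \<in> cball (-1) 1"
  shows "(Re a)\<^sup>2 / (2 * (cmod (1 / a) + 2)\<^sup>2)
           \<le> inverse_drift a w + inverse_drift a (parabolic_quad a w)"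
proof -
  define M where "M = (cmod (1 / a) + 2)\<^sup>2"
  define t where "t = cmod (w + 2)"
  have "0 < cmod (1 / a) + 2" by (simp add: add_nonneg_pos)
  then have "0 < M" by (simp add: M_def)
  have Re_a: "0 < Re a" "Re a \<le> 1/2"
    using Re_one_divide_ge_two_imp[OF assms(1)] abs_Re_le_cmod[of a] by auto
  have drift_w: "t\<^sup>2 / (2 * M) \<le> inverse_drift a w"
  proof -
    have "t\<^sup>2 / 2 \<le> Re (1 / a + w)"
      using cball_minus_one_norm_plus_two[OF assms(2)] assms(1) by (simp add: t_def)
    then have "t\<^sup>2 / (2 * M) \<le> Re (1 / a + w) / M"
      using \<open>0 < M\<close> by (simp add: divide_simps)
    with inverse_drift_ge[OF assms] show ?thesis unfolding M_def by linarith
  qed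
  have drift_gw: "(4 * Re a - 3 * t) / M \<le> inverse_drift a (parabolic_quad a w)"
  proof -
    have "4 * Re a - 3 * t \<le> Re (1 / a + parabolic_quad a w)"
      using Re_parabolic_quad_ge[OF Re_one_divide_ge_two_imp(2)[OF assms(1)] assms(2)] assms(1)
      by (simp add: t_def)
    then have "(4 * Re a - 3 * t) / M \<le> Re (1 / a + parabolic_quad a w) / M"
      using \<open>0 < M\<close> by (rule divide_right_mono[OF _ less_imp_le])
    with inverse_drift_ge[OF assms(1) parabolic_quad_cball[OF assms]] show ?thesis
      unfolding M_def by linarith
  qed
  txt \<open>Either \<open>w\<close> is far from \<open>-2\<close>, or \<open>parabolic_quad a w\<close> is close to \<open>4a - 2\<close>.\<close>
  have "(Re a)\<^sup>2 / (2 * M) \<le> inverse_drift a w + inverse_drift a (parabolic_quad a w)"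
  proof (cases "Re a \<le> t")
    case True
    then have "(Re a)\<^sup>2 / (2 * M) \<le> t\<^sup>2 / (2 * M)"
      using Re_a \<open>0 < M\<close> by (intro divide_right_mono power_mono) auto
    then show ?thesis
      using drift_w inverse_drift_nonneg[OF assms(1) parabolic_quad_cball[OF assms]] by linarith
  next
    case False
    have "(Re a)\<^sup>2 \<le> Re a / 2"
      using mult_left_mono[OF Re_a(2), of "Re a"] Re_a by (simp add: power2_eq_square)
    with False Re_a have "(Re a)\<^sup>2 / 2 \<le> 4 * Re a - 3 * t" by linarith
    then have "(Re a)\<^sup>2 / (2 * M) \<le> (4 * Re a - 3 * t) / M"
      using \<open>0 < M\<close> by (simp add: divide_simps)
    then show ?thesis
      using drift_gw inverse_drift_nonneg[OF assms] by linarith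
  qed
  then show ?thesis by (simp only: M_def)
qed

lemma Re_one_divide_parabolic_quad_le:
  assumes "2 \<le> Re (1 / a)" "w \<in> cball (-1) 1" "w = 0 \<or> Re (1 / w) \<le> -c"
  shows "parabolic_quad a w = 0 \<or> Re (1 / parabolic_quad a w) \<le> -(c + inverse_drift a w)"
proof (cases "w = 0 \<or> parabolic_quad a w = 0")
  case True
  then show ?thesis by (auto simp: parabolic_quad_def)
next
  case False
  have "a \<noteq> 0" using assms(1) by auto
  with False assms(3) show ?thesis by (simp add: Re_one_divide_parabolic_quad)
qed

lemma Re_one_divide_parabolic_quad_iterate_even:
  assumes "2 \<le> Re (1 / a)" "w \<in> cball (-1) 1"
    and drift: "\<And>v. v \<in> cball (-1) 1 \<Longrightarrow> \<delta> \<le> inverse_drift a v + inverse_drift a (parabolic_quad a v)"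
  shows "(parabolic_quad a ^^ (2 * n)) w = 0
           \<or> Re (1 / (parabolic_quad a ^^ (2 * n)) w) \<le> -(1/2 + real n * \<delta>)"
proof (induction n)
  case 0
  then show ?case using assms(2) mem_cball_minus_one_iff_Re_one_divide[of w] by auto
next
  case (Suc n)
  define v where "v = (parabolic_quad a ^^ (2 * n)) w"
  have v: "v \<in> cball (-1) 1"
    unfolding v_def using assms(1,2) by (rule parabolic_quad_iterate_cball)
  note step = Re_one_divide_parabolic_quad_le[OF assms(1)]
  have "parabolic_quad a (parabolic_quad a v) = 0 \<or> Re (1 / parabolic_quad a (parabolic_quad a v))
          \<le> -((1/2 + real n * \<delta>) + inverse_drift a v + inverse_drift a (parabolic_quad a v))"
    using step[OF parabolic_quad_cball[OF assms(1) v] step[OF v Suc.IH[folded v_def]]]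
    by (simp add: add.assoc)
  then show ?case using drift[OF v] by (auto simp: v_def algebra_simps)
qed

lemma norm_le_of_Re_one_divide_le:
  assumes "0 < c" "v = 0 \<or> Re (1 / v) \<le> -c"
  shows "cmod v \<le> 1 / c"
proof (cases "v = 0")
  case False
  have "c \<le> cmod (1 / v)" using assms(2) False abs_Re_le_cmod[of "1 / v"] by linarith
  with assms(1) False show ?thesis by (simp add: norm_divide field_simps)
qed (use assms in simp)

lemma norm_parabolic_quad_iterate_le:
  assumes "2 \<le> Re (1 / a)" "w \<in> cball (-1) 1" "0 \<le> \<delta>"
    and drift: "\<And>v. v \<in> cball (-1) 1 \<Longrightarrow> \<delta> \<le> inverse_drift a v + inverse_drift a (parabolic_quad a v)"
  shows "cmod ((parabolic_quad a ^^ m) w) \<le> 1 / (1/2 + real (m div 2) * \<delta>)"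
proof -
  define n where "n = m div 2"
  have pos: "0 < 1/2 + real n * \<delta>" using assms(3) by (simp add: add_pos_nonneg)
  obtain u where u: "u \<in> cball (-1) 1" "(parabolic_quad a ^^ m) w = (parabolic_quad a ^^ (2 * n)) u"
  proof (cases "even m")
    case True
    then show ?thesis using that[of w] assms(2) by (simp add: n_def)
  next
    case False
    then have "m = 2 * n + 1" by (simp add: n_def)
    then show ?thesis
      using that[of "parabolic_quad a w"] parabolic_quad_cball[OF assms(1,2)]
      by (simp add: funpow_Suc_right del: funpow.simps)
  qed
  show ?thesis
    unfolding u(2) n_def[symmetric]
    by (rule norm_le_of_Re_one_divide_le[OF pos
          Re_one_divide_parabolic_quad_iterate_even[OF assms(1) u(1) drift]])
qed

lemma uniform_limit_of_dist_le:
  assumes "\<And>n x. x \<in> S \<Longrightarrow> dist (f n x) (l x) \<le> b n" and "(b \<longlongrightarrow> 0) F"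
  shows "uniform_limit S f l F"
proof (rule uniform_limitI)
  fix e :: real
  assume "0 < e"
  with assms(2) have "\<forall>\<^sub>F n in F. b n < e" by (rule order_tendstoD)
  then show "\<forall>\<^sub>F n in F. \<forall>x\<in>S. dist (f n x) (l x) < e"
    by eventually_elim (blast intro: le_less_trans assms(1))
qed

lemma tendsto_inverse_half_plus_div_two:
  assumes "0 < \<delta>"
  shows "(\<lambda>n. 1 / (1/2 + real (n div 2) * \<delta>)) \<longlonglongrightarrow> 0"
proof -
  have "filterlim (\<lambda>n. real (n div 2)) at_top sequentially"
    by (rule filterlim_compose[OF filterlim_real_sequentially filterlim_at_top_div_const_nat]) simp
  then have "filterlim (\<lambda>n. 1/2 + real (n div 2) * \<delta>) at_top sequentially"
    by (intro filterlim_tendsto_add_at_top[OF tendsto_const]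
        filterlim_at_top_mult_tendsto_pos[OF tendsto_const]) (use assms in auto)
  then show ?thesis
    by (intro tendsto_divide_0[OF tendsto_const] filterlim_at_top_imp_at_infinity)
qed

theorem mainTheorem4:
  fixes a :: complex and \<phi> :: "complex \<Rightarrow> complex"
  assumes "cmod (a - 1/4) \<le> 1/4" and "a \<noteq> 0"
    and "\<And>z. \<phi> z = a * z^2 + (1 - 2*a) * z + a"
  shows "uniform_limit (ball 0 1) (\<lambda>n. \<phi> ^^ n) (\<lambda>_. 1) sequentially"
proof -
  have a: "2 \<le> Re (1 / a)" using assms(1,2) cmod_minus_quarter_le_iff by blast
  define \<delta> where "\<delta> = (Re a)\<^sup>2 / (2 * (cmod (1 / a) + 2)\<^sup>2)"
  have "0 < cmod (1 / a) + 2" by (simp add: add_nonneg_pos)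
  then have "0 < \<delta>" using Re_one_divide_ge_two_imp(1)[OF a] by (simp add: \<delta>_def)
  have drift: "\<delta> \<le> inverse_drift a v + inverse_drift a (parabolic_quad a v)"
    if "v \<in> cball (-1) 1" for v
    unfolding \<delta>_def using a that by (rule inverse_drift_two_step)
  have \<phi>_shift: "\<phi> (1 + w) = 1 + parabolic_quad a w" for w
    by (simp add: assms(3) parabolic_quad_def algebra_simps power2_eq_square)
  have conj: "(\<phi> ^^ n) z = 1 + (parabolic_quad a ^^ n) (z - 1)" for n z
    by (induction n) (simp_all add: \<phi>_shift)
  have "dist ((\<phi> ^^ n) z) 1 \<le> 1 / (1/2 + real (n div 2) * \<delta>)" if "z \<in> ball 0 1" for n z
  proof -
    have "z - 1 \<in> cball (-1) 1" using that by (simp add: dist_norm)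
    from norm_parabolic_quad_iterate_le[OF a this less_imp_le[OF \<open>0 < \<delta>\<close>] drift]
    show ?thesis by (simp add: conj dist_norm)
  qed
  then show ?thesis
    by (rule uniform_limit_of_dist_le[OF _ tendsto_inverse_half_plus_div_two[OF \<open>0 < \<delta>\<close>]])
qed

end
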